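(* Let $k$ be a field of characteristic $0$, let $S$ be a simple extension of $k$ of degree $n$, and let $c$ be a primitive element of $S/k$. Let $q$ be a regular quadratic form over $k$ of rank $m$ and let $x=(x^{(1)},\dots,x^{(m)})\in S^m$ satisfy $q(x)\neq 0$. Let $V_c=\{b\in S^*\mid cb^2\text{ is a primitive element of }S/k\}$. Then the set $$U_{c,x,q}=\{b\in V_c\mid q(\{xb^{-1},cb^2\})\neq 0\}$$ is non-empty and open in $S^*$, where for $b\in V_c$ we write $\{xb^{-1},cb^2\}=(\{x^{(1)}b^{-1},cb^2\},\dots,\{x^{(m)}b^{-1},cb^2\})\in k^m$.
   Context: A $k$-algebra $S$ is a simple extension of degree $n$ of the field $k$ if there is $c\in S^*$ (a primitive element) such that $1,c,\dots,c^{n-1}$ is a $k$-basis of $S$. For a primitive element $d$ and $y\in S$, $\{y,d\}$ denotes the coefficient $y_{n-1}$ in the unique expression $y=\sum_{i=0}^{n-1}y_i d^i$ with $y_i\in k$. $S$ is identified with $\mathbb{A}^n(k)$ via a $k$-basis and given the Zariski topology; $S^*$ carries the subspace topology. *)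

theory Defs
  imports Main "HOL.Vector_Spaces"
begin

definition k_algebra :: "('a::field \<Rightarrow> 'b::comm_ring_1 \<Rightarrow> 'b) \<Rightarrow> bool" where
  "k_algebra scale \<longleftrightarrow> vector_space scale \<and>
     (\<forall>a x y. scale a (x * y) = scale a x * y)"

definition units :: "'b::comm_ring_1 set" where
  "units = {b. b dvd 1}"

definition uinv :: "'b::comm_ring_1 \<Rightarrow> 'b" where
  "uinv b = (THE y. b * y = 1)"

definition primitive :: "('a::field \<Rightarrow> 'b::comm_ring_1 \<Rightarrow> 'b) \<Rightarrow> nat \<Rightarrow> 'b \<Rightarrow> bool" where
  "primitive scale n c \<longleftrightarrow> c \<in> units \<and> inj_on (\<lambda>i. c ^ i) {..<n} \<and>
     \<not> module.dependent scale ((\<lambda>i. c ^ i) ` {..<n}) \<and>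
     module.span scale ((\<lambda>i. c ^ i) ` {..<n}) = UNIV"

definition pcoords :: "('a::field \<Rightarrow> 'b::comm_ring_1 \<Rightarrow> 'b) \<Rightarrow> nat \<Rightarrow> 'b \<Rightarrow> 'b \<Rightarrow> (nat \<Rightarrow> 'a)" where
  "pcoords scale n d y = (THE ys. (\<forall>i\<ge>n. ys i = 0) \<and> y = (\<Sum>i<n. scale (ys i) (d ^ i)))"

text \<open>{y, d}: the coefficient y_(n-1) of the expansion of y in powers of d.\<close>
definition top_coeff :: "('a::field \<Rightarrow> 'b::comm_ring_1 \<Rightarrow> 'b) \<Rightarrow> nat \<Rightarrow> 'b \<Rightarrow> 'b \<Rightarrow> 'a" where
  "top_coeff scale n y d = pcoords scale n d y (n - 1)"

inductive_set poly_fun :: "((nat \<Rightarrow> 'a::comm_ring_1) \<Rightarrow> 'a) set" where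
  pf_const: "(\<lambda>v. a) \<in> poly_fun"
| pf_var: "(\<lambda>v. v i) \<in> poly_fun"
| pf_add: "p \<in> poly_fun \<Longrightarrow> q \<in> poly_fun \<Longrightarrow> (\<lambda>v. p v + q v) \<in> poly_fun"
| pf_mult: "p \<in> poly_fun \<Longrightarrow> q \<in> poly_fun \<Longrightarrow> (\<lambda>v. p v * q v) \<in> poly_fun"

text \<open>Zariski-open subsets of S, where S is identified with k^n via the k-basis
  1, c, ..., c^(n-1): complements of common zero sets of sets of polynomials.\<close>
definition zariski_open :: "('a::field \<Rightarrow> 'b::comm_ring_1 \<Rightarrow> 'b) \<Rightarrow> nat \<Rightarrow> 'b \<Rightarrow> 'b set \<Rightarrow> bool" where
  "zariski_open scale n c W \<longleftrightarrow>
     (\<exists>P \<subseteq> poly_fun. W = {y. \<exists>p\<in>P. p (pcoords scale n c y) \<noteq> 0})"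

definition open_in_units :: "('a::field \<Rightarrow> 'b::comm_ring_1 \<Rightarrow> 'b) \<Rightarrow> nat \<Rightarrow> 'b \<Rightarrow> 'b set \<Rightarrow> bool" where
  "open_in_units scale n c U \<longleftrightarrow> (\<exists>W. zariski_open scale n c W \<and> U = W \<inter> units)"

definition qform :: "(nat \<Rightarrow> nat \<Rightarrow> 'a::comm_ring_1) \<Rightarrow> nat \<Rightarrow> (nat \<Rightarrow> 'a) \<Rightarrow> 'a" where
  "qform Q m v = (\<Sum>i<m. \<Sum>j<m. Q i j * v i * v j)"

definition regular_qform :: "(nat \<Rightarrow> nat \<Rightarrow> 'a::field) \<Rightarrow> nat \<Rightarrow> bool" where
  "regular_qform Q m \<longleftrightarrow>
     (\<forall>v. (\<forall>w. qform Q m (\<lambda>i. v i + w i) - qform Q m v - qform Q m w = 0)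
          \<longrightarrow> (\<forall>i<m. v i = 0))"

text \<open>The quadratic form evaluated on S^m (extension of scalars).\<close>
definition qformS :: "('a::field \<Rightarrow> 'b::comm_ring_1 \<Rightarrow> 'b) \<Rightarrow> (nat \<Rightarrow> nat \<Rightarrow> 'a) \<Rightarrow> nat \<Rightarrow> (nat \<Rightarrow> 'b) \<Rightarrow> 'b" where
  "qformS scale Q m x = (\<Sum>i<m. \<Sum>j<m. scale (Q i j) (x i * x j))"

end

theory Submission
  imports Defs "Jordan_Normal_Form.Determinant" "HOL-Computational_Algebra.Polynomial"
begin

(* If b is a unit and c b^2 is primitive, Cramer's rule writes {x b^-1, c b^2} as
   G(b) / (N(b) D(c b^2)), where N is the norm, D(d) is the determinant of the coordinates of
   1, d, ..., d^(n-1), and G is polynomial in the coordinates of b. So U is the non-vanishing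
   locus in S^* of the polynomial D(c b^2) q(G(b)), hence open.

   If U were empty, then on every line b = 1 + t e the polynomial q(G(b)) in t would vanish
   outside the finitely many roots of N(b) D(c b^2), hence identically. Its coefficients of
   t^0, t^1 and t^2 show that the vectors ({e y_a, c})_a for e in S span a totally isotropic
   subspace for q, where y_a is x_a with its j-th coordinate multiplied by 2j + 1. As
   (e, z) |-> {e z, c} is a nondegenerate pairing on S, this forces
   sum_a x_a (dq/dx_a)(x) = 2 q(x) = 0. *)

section \<open>Power bases\<close>

lemma primitive_imp_pos:
  assumes "vector_space scale" and "primitive scale n d"
  shows "0 < n"
proof -
  interpret vector_space scale by fact
  show ?thesis
  proof (rule ccontr)
    assume "\<not> 0 < n"
    then have "span {} = UNIV" using assms(2) unfolding primitive_def by simp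
    then show False by (metis UNIV_I span_empty singletonD zero_neq_one)
  qed
qed

lemma primitive_sum_eq_0:
  assumes vs: "vector_space scale" and p: "primitive scale n d"
    and sum: "(\<Sum>i<n. scale (v i) (d ^ i)) = 0" and "i < n"
  shows "v i = 0"
proof -
  interpret vector_space scale by fact
  let ?B = "(\<lambda>i. d ^ i) ` {..<n}"
  have inj: "inj_on (\<lambda>i. d ^ i) {..<n}" and indep: "\<not> dependent ?B"
    using p unfolding primitive_def by auto
  define u where "u w = v (the_inv_into {..<n} (\<lambda>i. d ^ i) w)" for w
  have u_power: "u (d ^ j) = v j" if "j < n" for j
    unfolding u_def using the_inv_into_f_f[OF inj] that by simp
  have "(\<Sum>w\<in>?B. scale (u w) w) = (\<Sum>j<n. scale (v j) (d ^ j))"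
    by (simp add: sum.reindex[OF inj] u_power)
  with sum indep dependent_finite[of ?B] have "\<forall>w\<in>?B. u w = 0" by auto
  then show ?thesis using u_power \<open>i < n\<close> by auto
qed

lemma primitive_sum_eqD:
  assumes vs: "vector_space scale" and "primitive scale n d"
    and "(\<Sum>i<n. scale (v i) (d ^ i)) = (\<Sum>i<n. scale (w i) (d ^ i))" and "i < n"
  shows "v i = w i"
proof -
  interpret vector_space scale by fact
  have "(\<Sum>i<n. scale (v i - w i) (d ^ i)) = 0"
    using assms(3) by (simp add: scale_left_diff_distrib sum_subtractf)
  then show ?thesis using primitive_sum_eq_0[OF vs assms(2)] assms(4) by fastforce
qed

lemma primitive_expansion_exists:
  assumes "vector_space scale" and "primitive scale n d"
  obtains v where "y = (\<Sum>i<n. scale (v i) (d ^ i))"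
proof -
  interpret vector_space scale by fact
  let ?B = "(\<lambda>i. d ^ i) ` {..<n}"
  have inj: "inj_on (\<lambda>i. d ^ i) {..<n}" and "span ?B = UNIV"
    using assms(2) unfolding primitive_def by auto
  then obtain u where "y = (\<Sum>w\<in>?B. scale (u w) w)" using span_finite[of ?B] by auto
  then have "y = (\<Sum>j<n. scale (u (d ^ j)) (d ^ j))" by (simp add: sum.reindex[OF inj])
  then show thesis by (rule that)
qed

lemma pcoords_expansion:
  assumes vs: "vector_space scale" and p: "primitive scale n d"
  shows "(\<forall>i\<ge>n. pcoords scale n d y i = 0) \<and> y = (\<Sum>i<n. scale (pcoords scale n d y i) (d ^ i))"
proof -
  obtain v where v: "y = (\<Sum>i<n. scale (v i) (d ^ i))" using primitive_expansion_exists[OF vs p] .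
  define w where "w i = (if i < n then v i else 0)" for i
  have w: "(\<forall>i\<ge>n. w i = 0) \<and> y = (\<Sum>i<n. scale (w i) (d ^ i))"
    unfolding w_def by (simp add: v)
  have "ys = w" if ys: "(\<forall>i\<ge>n. ys i = 0) \<and> y = (\<Sum>i<n. scale (ys i) (d ^ i))" for ys
  proof
    fix i show "ys i = w i"
      using ys w primitive_sum_eqD[OF vs p, of ys w i] by (cases "i < n") auto
  qed
  with w have "\<exists>!ys. (\<forall>i\<ge>n. ys i = 0) \<and> y = (\<Sum>i<n. scale (ys i) (d ^ i))" by blast
  then show ?thesis unfolding pcoords_def by (rule theI')
qed

lemma pcoords_eqI:
  assumes vs: "vector_space scale" and p: "primitive scale n d"
    and "y = (\<Sum>i<n. scale (v i) (d ^ i))" and "i < n"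
  shows "pcoords scale n d y i = v i"
  using primitive_sum_eqD[OF vs p _ assms(4), of "pcoords scale n d y" v]
    pcoords_expansion[OF vs p, of y] assms(3) by simp

lemma hankel_triangular_eq_0:
  fixes scale :: "'a::comm_ring_1 \<Rightarrow> 'b::ab_group_add \<Rightarrow> 'b" and n :: nat
  assumes "Modules.module scale"
    and h_low: "\<And>s. s < n - 1 \<Longrightarrow> h s = 0" and h_top: "h (n - 1) = 1"
    and sums: "\<And>r. r < n \<Longrightarrow> (\<Sum>s<n. scale (h (r + s)) (W s)) = 0"
    and "s < n"
  shows "W s = 0"
proof -
  interpret Modules.module scale by fact
  have "W (n - 1 - k) = 0" if "k < n" for k
    using that
  proof (induction k rule: less_induct)
    case (less k)
    have "scale (h (k + j)) (W j) = (if j = n - 1 - k then W j else 0)" if "j < n" for j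
    proof -
      consider "j < n - 1 - k" | "j = n - 1 - k" | "n - 1 - j < k" using \<open>j < n\<close> by linarith
      then show ?thesis
      proof cases
        case 3
        then have "W (n - 1 - (n - 1 - j)) = 0" using less.IH less.prems by simp
        then show ?thesis using 3 \<open>j < n\<close> by auto
      qed (use h_low h_top less.prems in auto)
    qed
    then have "(\<Sum>j<n. scale (h (k + j)) (W j)) = (\<Sum>j<n. if j = n - 1 - k then W j else 0)"
      by (intro sum.cong) auto
    also have "\<dots> = W (n - 1 - k)" using less.prems by simp
    finally have "(\<Sum>j<n. scale (h (k + j)) (W j)) = W (n - 1 - k)" .
    then show ?case using sums[OF less.prems] by simp
  qed
  from this[of "n - 1 - s"] \<open>s < n\<close> show ?thesis by simp
qed

section \<open>Polynomial functions of the coordinates\<close>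

lemma poly_fun_sum:
  "finite A \<Longrightarrow> (\<And>j. j \<in> A \<Longrightarrow> f j \<in> poly_fun) \<Longrightarrow> (\<lambda>v. \<Sum>j\<in>A. f j v) \<in> poly_fun"
proof (induction A rule: finite_induct)
  case empty
  then show ?case using pf_const[of 0] by simp
next
  case (insert a A)
  then have "(\<lambda>v. f a v + (\<Sum>j\<in>A. f j v)) \<in> poly_fun" by (intro pf_add) auto
  with insert show ?case by simp
qed

lemma poly_fun_prod:
  "finite A \<Longrightarrow> (\<And>j. j \<in> A \<Longrightarrow> f j \<in> poly_fun) \<Longrightarrow> (\<lambda>v. \<Prod>j\<in>A. f j v) \<in> poly_fun"
proof (induction A rule: finite_induct)
  case empty
  then show ?case using pf_const[of 1] by simp
next
  case (insert a A)
  then have "(\<lambda>v. f a v * (\<Prod>j\<in>A. f j v)) \<in> poly_fun" by (intro pf_mult) auto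
  with insert show ?case by simp
qed

lemma poly_fun_qform:
  "(\<And>i. i < m \<Longrightarrow> g i \<in> poly_fun) \<Longrightarrow> (\<lambda>v. qform Q m (\<lambda>i. g i v)) \<in> poly_fun"
  unfolding qform_def by (intro poly_fun_sum pf_mult pf_const) auto

lemma poly_fun_on_line:
  fixes p :: "(nat \<Rightarrow> 'a::comm_ring_1) \<Rightarrow> 'a"
  assumes "p \<in> poly_fun"
  shows "\<exists>P. \<forall>t. p (\<lambda>i. u i + t * w i) = poly P t"
  using assms
proof induction
  case (pf_const a)
  show ?case by (intro exI[of _ "[:a:]"]) simp
next
  case (pf_var i)
  show ?case by (intro exI[of _ "[:u i, w i:]"]) (simp add: algebra_simps)
next
  case (pf_add p q)
  then obtain P R
    where "\<forall>t. p (\<lambda>i. u i + t * w i) = poly P t" and "\<forall>t. q (\<lambda>i. u i + t * w i) = poly R t"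
    by blast
  then show ?case by (intro exI[of _ "P + R"]) simp
next
  case (pf_mult p q)
  then obtain P R
    where "\<forall>t. p (\<lambda>i. u i + t * w i) = poly P t" and "\<forall>t. q (\<lambda>i. u i + t * w i) = poly R t"
    by blast
  then show ?case by (intro exI[of _ "P * R"]) simp
qed

lemma poly_fun_det:
  assumes "\<And>i j. i < N \<Longrightarrow> j < N \<Longrightarrow> f i j \<in> poly_fun"
  shows "(\<lambda>v. det (mat N N (\<lambda>(i, j). f i j v))) \<in> poly_fun"
proof -
  let ?P = "{p. p permutes {0..<N}}"
  have perm_less: "p i < N" if "p \<in> ?P" "i < N" for p i
    using that permutes_in_image[of p "{0..<N}" i] by auto
  have "det (mat N N (\<lambda>(i, j). f i j v)) = (\<Sum>p\<in>?P. signof p * (\<Prod>i = 0..<N. f i (p i) v))" for v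
    by (subst det_def') (auto intro!: sum.cong prod.cong simp: perm_less)
  moreover have "(\<lambda>v. \<Sum>p\<in>?P. signof p * (\<Prod>i = 0..<N. f i (p i) v)) \<in> poly_fun"
    by (intro poly_fun_sum pf_mult pf_const poly_fun_prod finite_permutations)
      (auto intro: assms perm_less)
  ultimately show ?thesis by simp
qed

lemma poly_fun_adj_mat:
  assumes "\<And>i j. i < N \<Longrightarrow> j < N \<Longrightarrow> f i j \<in> poly_fun" and "i < N" "j < N"
  shows "(\<lambda>v. adj_mat (mat N N (\<lambda>(i, j). f i j v)) $$ (i, j)) \<in> poly_fun"
proof -
  define g where "g a b = f (if a < j then a else Suc a) (if b < i then b else Suc b)" for a b
  have "mat_delete (mat N N (\<lambda>(i, j). f i j v)) j i = mat (N - 1) (N - 1) (\<lambda>(a, b). g a b v)" for v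
    by (rule eq_matI) (auto simp: mat_delete_def g_def)
  then have "adj_mat (mat N N (\<lambda>(i, j). f i j v)) $$ (i, j) =
      (-1) ^ (j + i) * det (mat (N - 1) (N - 1) (\<lambda>(a, b). g a b v))" for v
    unfolding adj_mat_def cofactor_def using assms(2,3) by simp
  moreover have "(\<lambda>v. (-1) ^ (j + i) * det (mat (N - 1) (N - 1) (\<lambda>(a, b). g a b v))) \<in> poly_fun"
    by (intro pf_mult pf_const poly_fun_det) (auto simp: g_def intro!: assms(1))
  ultimately show ?thesis by simp
qed

lemma mat_adj_mat_entry:
  assumes A: "A \<in> carrier_mat N N" and "k < N" "l < N"
  shows "(\<Sum>j<N. A $$ (k, j) * adj_mat A $$ (j, l)) = (if k = l then det A else 0)"
proof -
  have "(\<Sum>j<N. A $$ (k, j) * adj_mat A $$ (j, l)) = (A * adj_mat A) $$ (k, l)"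
    using assms adj_mat(1)[OF A] by (simp add: scalar_prod_def lessThan_atLeast0)
  also have "\<dots> = (det A \<cdot>\<^sub>m 1\<^sub>m N) $$ (k, l)" using adj_mat(2)[OF A] by simp
  finally show ?thesis using assms by simp
qed

lemma adj_mat_mat_entry:
  assumes A: "A \<in> carrier_mat N N" and "k < N" "l < N"
  shows "(\<Sum>j<N. adj_mat A $$ (k, j) * A $$ (j, l)) = (if k = l then det A else 0)"
proof -
  have "(\<Sum>j<N. adj_mat A $$ (k, j) * A $$ (j, l)) = (adj_mat A * A) $$ (k, l)"
    using assms adj_mat(1)[OF A] by (simp add: scalar_prod_def lessThan_atLeast0)
  also have "\<dots> = (det A \<cdot>\<^sub>m 1\<^sub>m N) $$ (k, l)" using adj_mat(3)[OF A] by simp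
  finally show ?thesis using assms by simp
qed

section \<open>Polynomials and quadratic forms\<close>

lemma coeff_mult_1: "coeff (p * q) 1 = coeff p 0 * coeff q 1 + coeff p 1 * coeff q 0"
  by (simp add: coeff_mult atMost_Suc ac_simps)

lemma coeff_mult_2:
  "coeff (p * q) 2 = coeff p 0 * coeff q 2 + coeff p 1 * coeff q 1 + coeff p 2 * coeff q 0"
  by (simp add: coeff_mult atMost_Suc numeral_2_eq_2 ac_simps)

lemma poly_eq_0_if_roots_cofinite:
  fixes p :: "'a::idom poly"
  assumes "infinite (UNIV :: 'a set)" and "finite Z" and "\<And>t. t \<notin> Z \<Longrightarrow> poly p t = 0"
  shows "p = 0"
proof (rule ccontr)
  assume "p \<noteq> 0"
  then have "finite (Z \<union> {t. poly p t = 0})" using assms(2) poly_roots_finite by blast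
  moreover have "Z \<union> {t. poly p t = 0} = UNIV" using assms(3) by auto
  ultimately show False using assms(1) by simp
qed

definition qform_grad :: "(nat \<Rightarrow> nat \<Rightarrow> 'a::comm_ring_1) \<Rightarrow> nat \<Rightarrow> (nat \<Rightarrow> 'a) \<Rightarrow> nat \<Rightarrow> 'a" where
  "qform_grad Q m u b = (\<Sum>a<m. (Q a b + Q b a) * u a)"

definition qform_polar :: "(nat \<Rightarrow> nat \<Rightarrow> 'a::comm_ring_1) \<Rightarrow> nat \<Rightarrow> (nat \<Rightarrow> 'a) \<Rightarrow> (nat \<Rightarrow> 'a) \<Rightarrow> 'a" where
  "qform_polar Q m u w = (\<Sum>a<m. \<Sum>b<m. Q a b * (u a * w b + w a * u b))"

lemma qform_polar_eq_grad: "qform_polar Q m u w = (\<Sum>b<m. w b * qform_grad Q m u b)"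
proof -
  have "qform_polar Q m u w = (\<Sum>a<m. \<Sum>b<m. Q a b * u a * w b) + (\<Sum>a<m. \<Sum>b<m. Q a b * w a * u b)"
    unfolding qform_polar_def by (simp add: algebra_simps sum.distrib)
  also have "(\<Sum>a<m. \<Sum>b<m. Q a b * u a * w b) = (\<Sum>b<m. \<Sum>a<m. Q a b * u a * w b)"
    by (rule sum.swap)
  also have "(\<Sum>b<m. \<Sum>a<m. Q a b * u a * w b) + (\<Sum>a<m. \<Sum>b<m. Q a b * w a * u b)
      = (\<Sum>b<m. \<Sum>a<m. Q a b * u a * w b + Q b a * w b * u a)"
    by (simp add: sum.distrib)
  also have "\<dots> = (\<Sum>b<m. w b * qform_grad Q m u b)"
    unfolding qform_grad_def by (simp add: sum_distrib_left algebra_simps)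
  finally show ?thesis .
qed

lemma qform_add: "qform Q m (\<lambda>a. u a + w a) = qform Q m u + qform Q m w + qform_polar Q m u w"
  unfolding qform_def qform_polar_def by (simp add: algebra_simps sum.distrib)

lemma qform_scaled_diff:
  "qform Q m (\<lambda>a. \<alpha> * u a - w a) = \<alpha>\<^sup>2 * qform Q m u - \<alpha> * qform_polar Q m u w + qform Q m w"
  unfolding qform_def qform_polar_def
  by (simp add: algebra_simps power2_eq_square sum.distrib sum_subtractf sum_distrib_left)

lemma qform_polar_scaled_diff:
  "qform_polar Q m u (\<lambda>a. \<alpha> * u a - w a) = 2 * \<alpha> * qform Q m u - qform_polar Q m u w"
  unfolding qform_def qform_polar_def
  by (simp add: algebra_simps sum.distrib sum_subtractf sum_distrib_left)

lemma qform_divide: "qform Q m (\<lambda>i. w i / a) = qform Q m w / a\<^sup>2"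
  for a :: "'a::field"
  unfolding qform_def by (simp add: sum_divide_distrib power2_eq_square algebra_simps)

definition qform_poly :: "(nat \<Rightarrow> nat \<Rightarrow> 'a::comm_ring_1) \<Rightarrow> nat \<Rightarrow> (nat \<Rightarrow> 'a poly) \<Rightarrow> 'a poly" where
  "qform_poly Q m P = (\<Sum>a<m. \<Sum>b<m. smult (Q a b) (P a * P b))"

lemma poly_qform_poly: "poly (qform_poly Q m P) t = qform Q m (\<lambda>a. poly (P a) t)"
  unfolding qform_poly_def qform_def by (simp add: poly_sum mult.assoc)

lemma coeff_qform_poly:
  shows "coeff (qform_poly Q m P) 0 = qform Q m (\<lambda>a. coeff (P a) 0)"
    and "coeff (qform_poly Q m P) 1 = qform_polar Q m (\<lambda>a. coeff (P a) 0) (\<lambda>a. coeff (P a) 1)"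
    and "coeff (qform_poly Q m P) 2 = qform_polar Q m (\<lambda>a. coeff (P a) 0) (\<lambda>a. coeff (P a) 2)
                     + qform Q m (\<lambda>a. coeff (P a) 1)"
  unfolding qform_poly_def qform_def qform_polar_def
  by (simp_all only: coeff_sum coeff_smult coeff_mult_0 coeff_mult_1 coeff_mult_2)
    (simp_all add: algebra_simps sum.distrib)

definition twist_poly :: "'b::comm_ring_1 \<Rightarrow> 'b \<Rightarrow> 'b poly" where
  "twist_poly c e = [:c:] * [:1, e:]\<^sup>2"

lemma poly_twist_poly: "poly (twist_poly c e) x = c * (1 + x * e)\<^sup>2"
  unfolding twist_poly_def by simp

lemma coeff_twist_poly_power:
  shows "coeff (twist_poly c e ^ j) 0 = c ^ j"
    and "coeff (twist_poly c e ^ j) 1 = of_nat (2 * j) * c ^ j * e"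
proof -
  let ?p = "twist_poly c e"
  have p0: "coeff ?p 0 = c"
    unfolding twist_poly_def by (simp add: coeff_mult_0 power2_eq_square)
  have p1: "coeff ?p 1 = 2 * c * e"
    unfolding twist_poly_def
    by (simp only: coeff_mult_0 coeff_mult_1 power2_eq_square) (simp add: algebra_simps)
  show const: "coeff (?p ^ j) 0 = c ^ j" for j
    by (induction j) (simp_all add: coeff_mult_0 p0)
  show "coeff (?p ^ j) 1 = of_nat (2 * j) * c ^ j * e"
  proof (induction j)
    case (Suc j)
    have "coeff (?p ^ Suc j) 1 = coeff ?p 0 * coeff (?p ^ j) 1 + coeff ?p 1 * coeff (?p ^ j) 0"
      by (simp only: power_Suc coeff_mult_1)
    also have "\<dots> = c * (of_nat (2 * j) * c ^ j * e) + 2 * c * e * c ^ j"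
      by (simp only: Suc.IH p0 p1 const)
    also have "\<dots> = of_nat (2 * Suc j) * c ^ Suc j * e"
      by (simp add: algebra_simps)
    finally show ?case .
  qed simp
qed

section \<open>Coordinates in a simple extension\<close>

lemma units_mult: "a \<in> units \<Longrightarrow> b \<in> units \<Longrightarrow> a * b \<in> units"
  unfolding units_def by (simp add: unit_prod)

lemma units_power: "a \<in> units \<Longrightarrow> a ^ k \<in> units"
  by (induction k) (simp_all add: units_mult[unfolded units_def] units_def)

lemma mult_uinv:
  assumes "b \<in> units"
  shows "b * uinv b = 1"
proof -
  from assms have "b dvd 1" unfolding units_def by simp
  then obtain y where y: "b * y = 1" by (metis dvdE)
  have "z = y" if "b * z = 1" for z
  proof -
    have "z = z * (b * y)" using y by simp
    also have "\<dots> = y * (b * z)" by (simp only: ac_simps)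
    also have "\<dots> = y" using that by simp
    finally show ?thesis .
  qed
  with y have "b * (THE y. b * y = 1) = 1" by (rule theI)
  then show ?thesis unfolding uinv_def .
qed

locale simple_extension =
  fixes scale :: "'a::field_char_0 \<Rightarrow> 'b::comm_ring_1 \<Rightarrow> 'b" and n :: nat and c :: 'b
  assumes k_algebra: "k_algebra scale" and primitive_c: "primitive scale n c"
begin

lemma vector_space: "vector_space scale"
  using k_algebra unfolding k_algebra_def by simp

sublocale vector_space scale
  by (rule vector_space)

lemma scale_mult_left: "scale a (x * y) = scale a x * y"
  using k_algebra unfolding k_algebra_def by simp

lemma scale_mult_right: "scale a (x * y) = x * scale a y"
  by (metis scale_mult_left mult.commute)

lemma n_pos: "0 < n"
  by (rule primitive_imp_pos[OF vector_space primitive_c])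

lemma c_unit: "c \<in> units"
  using primitive_c unfolding primitive_def by simp

definition embed :: "'a \<Rightarrow> 'b" where
  "embed a = scale a 1"

(* Not for simp: scale is a parameter of every constant of this locale, embed included,
   so rewriting with this equation loops. *)
lemma scale_eq_embed_mult: "scale a x = embed a * x"
  unfolding embed_def by (metis scale_mult_left mult_1)

lemma embed_mult_eq_scale: "embed a * x = scale a x"
  and mult_embed_eq_scale: "x * embed a = scale a x"
  by (simp_all add: scale_eq_embed_mult mult.commute)

lemma embed_0 [simp]: "embed 0 = 0"
  unfolding embed_def by simp

lemma embed_1 [simp]: "embed 1 = 1"
  unfolding embed_def by simp

lemma embed_add [simp]: "embed (a + b) = embed a + embed b"
  unfolding embed_def by (simp add: scale_left_distrib)

lemma embed_mult [simp]: "embed (a * b) = embed a * embed b"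
  by (metis embed_def scale_eq_embed_mult scale_scale)

lemma embed_of_nat [simp]: "embed (of_nat k) = of_nat k"
  by (induction k) simp_all

lemma embed_numeral [simp]: "embed (numeral k) = numeral k"
  by (metis embed_of_nat of_nat_numeral)

definition coord :: "'b \<Rightarrow> nat \<Rightarrow> 'a" where
  "coord y = pcoords scale n c y"

definition of_coord :: "(nat \<Rightarrow> 'a) \<Rightarrow> 'b" where
  "of_coord v = (\<Sum>i<n. scale (v i) (c ^ i))"

lemma coord_ge: "n \<le> i \<Longrightarrow> coord y i = 0"
  unfolding coord_def using pcoords_expansion[OF vector_space primitive_c, of y] by blast

lemma of_coord_coord [simp]: "of_coord (coord y) = y"
  unfolding coord_def of_coord_def using pcoords_expansion[OF vector_space primitive_c, of y] by metis

lemma coord_expansion: "y = (\<Sum>i<n. scale (coord y i) (c ^ i))"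
  using of_coord_coord[of y] unfolding of_coord_def by simp

lemma coord_of_coord: "i < n \<Longrightarrow> coord (of_coord v) i = v i"
  unfolding coord_def of_coord_def by (rule pcoords_eqI[OF vector_space primitive_c]) simp_all

lemma of_coord_cong: "(\<And>i. i < n \<Longrightarrow> v i = w i) \<Longrightarrow> of_coord v = of_coord w"
  unfolding of_coord_def by (rule sum.cong) auto

lemma coord_eqI: "(\<And>i. i < n \<Longrightarrow> coord y i = coord z i) \<Longrightarrow> y = z"
  by (metis of_coord_coord of_coord_cong)

lemma coord_add: "coord (y + z) i = coord y i + coord z i"
proof (cases "i < n")
  case True
  have "y + z = of_coord (\<lambda>i. coord y i + coord z i)"
    unfolding of_coord_def
    by (subst (1 2) coord_expansion) (simp add: scale_left_distrib sum.distrib)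
  with True show ?thesis by (simp add: coord_of_coord)
qed (simp add: coord_ge)

lemma coord_scale: "coord (scale a y) i = a * coord y i"
proof (cases "i < n")
  case True
  have "scale a y = of_coord (\<lambda>i. a * coord y i)"
    unfolding of_coord_def by (subst coord_expansion) (simp add: scale_sum_right)
  with True show ?thesis by (simp add: coord_of_coord)
qed (simp add: coord_ge)

lemma coord_0: "coord 0 i = 0"
  using coord_scale[of 0 0 i] by simp

lemma coord_diff: "coord (y - z) i = coord y i - coord z i"
  using coord_add[of "y - z" z i] by simp

lemma coord_sum: "coord (\<Sum>j\<in>A. f j) i = (\<Sum>j\<in>A. coord (f j) i)"
  by (induction A rule: infinite_finite_induct) (simp_all add: coord_0 coord_add)

lemma coord_embed_mult: "coord (embed a * y) i = a * coord y i"
  by (metis coord_scale scale_eq_embed_mult)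

lemma coord_c_power: "j < n \<Longrightarrow> coord (c ^ j) i = (if i = j then 1 else 0)"
proof -
  assume j: "j < n"
  have "(\<Sum>i<n. scale (if i = j then 1 else 0) (c ^ i)) = (\<Sum>i<n. if i = j then c ^ i else 0)"
    by (rule sum.cong) auto
  then have "c ^ j = of_coord (\<lambda>i. if i = j then 1 else 0)"
    unfolding of_coord_def using j by simp
  then show ?thesis using coord_ge[of i] coord_of_coord by (cases "i < n") (auto simp: j)
qed

lemma coord_mult:
  "coord (y * z) k = (\<Sum>i<n. \<Sum>j<n. coord y i * coord z j * coord (c ^ (i + j)) k)"
proof -
  have "y * z = (\<Sum>i<n. \<Sum>j<n. scale (coord y i) (c ^ i) * scale (coord z j) (c ^ j))"
    by (subst (1 2) coord_expansion) (rule sum_product)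
  also have "\<dots> = (\<Sum>i<n. \<Sum>j<n. scale (coord y i * coord z j) (c ^ (i + j)))"
    by (simp add: power_add mult.commute flip: scale_mult_left scale_mult_right)
  finally show ?thesis by (simp add: coord_sum coord_scale algebra_simps)
qed

section \<open>Cramer's rule and the primitivity criterion\<close>

definition coord_mat :: "(nat \<Rightarrow> 'b) \<Rightarrow> 'a mat" where
  "coord_mat g = mat n n (\<lambda>(k, j). coord (g j) k)"

lemma coord_mat_carrier: "coord_mat g \<in> carrier_mat n n"
  unfolding coord_mat_def by simp

lemma coord_mat_index: "k < n \<Longrightarrow> j < n \<Longrightarrow> coord_mat g $$ (k, j) = coord (g j) k"
  unfolding coord_mat_def by simp

lemma coord_sum_scale:
  "k < n \<Longrightarrow> coord (\<Sum>l<n. scale (w l) (g l)) k = (\<Sum>l<n. coord_mat g $$ (k, l) * w l)"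
  by (simp add: coord_sum coord_scale coord_mat_index mult.commute)

definition cramer_coeff :: "(nat \<Rightarrow> 'b) \<Rightarrow> 'b \<Rightarrow> nat \<Rightarrow> 'a" where
  "cramer_coeff g y j = (\<Sum>l<n. adj_mat (coord_mat g) $$ (j, l) * coord y l)"

lemma cramer_coeff_scale: "cramer_coeff g (scale a y) j = a * cramer_coeff g y j"
  unfolding cramer_coeff_def by (simp add: coord_scale algebra_simps sum_distrib_left)

lemma cramer_coeff_sum: "cramer_coeff g (\<Sum>i\<in>A. f i) j = (\<Sum>i\<in>A. cramer_coeff g (f i) j)"
  unfolding cramer_coeff_def
  by (simp add: coord_sum sum_distrib_left sum_distrib_right mult.commute[of _ "coord _ _"]
      sum.swap[of _ A])

lemma sum_cramer_coeff: "(\<Sum>j<n. scale (cramer_coeff g y j) (g j)) = scale (det (coord_mat g)) y"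
proof (rule coord_eqI)
  fix k assume k: "k < n"
  have "coord (\<Sum>j<n. scale (cramer_coeff g y j) (g j)) k
      = (\<Sum>l<n. (\<Sum>j<n. coord_mat g $$ (k, j) * adj_mat (coord_mat g) $$ (j, l)) * coord y l)"
    unfolding coord_sum_scale[OF k] cramer_coeff_def
    by (simp add: sum_distrib_left sum_distrib_right mult.assoc) (rule sum.swap)
  also have "\<dots> = (\<Sum>l<n. (if k = l then det (coord_mat g) * coord y l else 0))"
    by (intro sum.cong refl) (simp add: mat_adj_mat_entry[OF coord_mat_carrier k])
  also have "\<dots> = coord (scale (det (coord_mat g)) y) k"
    using k by (simp add: coord_scale)
  finally show "coord (\<Sum>j<n. scale (cramer_coeff g y j) (g j)) k = coord (scale (det (coord_mat g)) y) k" .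
qed

lemma expansion_cramer_coeff:
  assumes "det (coord_mat g) \<noteq> 0"
  shows "y = (\<Sum>j<n. scale (cramer_coeff g y j / det (coord_mat g)) (g j))"
proof -
  have "y = scale (1 / det (coord_mat g)) (scale (det (coord_mat g)) y)" using assms by simp
  also have "\<dots> = (\<Sum>j<n. scale (cramer_coeff g y j / det (coord_mat g)) (g j))"
    unfolding sum_cramer_coeff[symmetric] by (simp add: scale_sum_right divide_inverse mult.commute)
  finally show ?thesis .
qed

lemma det_coord_mat_nonzero_imp_independent:
  assumes sum: "(\<Sum>l<n. scale (w l) (g l)) = 0" and det: "det (coord_mat g) \<noteq> 0" and "i < n"
  shows "w i = 0"
proof -
  have "(\<Sum>l<n. coord_mat g $$ (j, l) * w l) = 0" if "j < n" for j
    using coord_sum_scale[OF that, of w g] sum by (simp add: coord_0)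
  then have "0 = (\<Sum>j<n. adj_mat (coord_mat g) $$ (i, j) * (\<Sum>l<n. coord_mat g $$ (j, l) * w l))"
    by simp
  also have "\<dots> = (\<Sum>l<n. (\<Sum>j<n. adj_mat (coord_mat g) $$ (i, j) * coord_mat g $$ (j, l)) * w l)"
    by (simp add: sum_distrib_left sum_distrib_right mult.assoc) (rule sum.swap)
  also have "\<dots> = (\<Sum>l<n. if i = l then det (coord_mat g) * w l else 0)"
    by (intro sum.cong refl) (simp add: adj_mat_mat_entry[OF coord_mat_carrier \<open>i < n\<close>])
  also have "\<dots> = det (coord_mat g) * w i" using \<open>i < n\<close> by simp
  finally show ?thesis using det by simp
qed

lemma det_coord_mat_eq_0_imp_dependent:
  assumes "det (coord_mat g) = 0"
  obtains w where "\<exists>l<n. w l \<noteq> 0" and "(\<Sum>l<n. scale (w l) (g l)) = 0"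
proof -
  obtain v where v: "v \<in> carrier_vec n" "v \<noteq> 0\<^sub>v n" "coord_mat g *\<^sub>v v = 0\<^sub>v n"
    using det_0_iff_vec_prod_zero_field[OF coord_mat_carrier] assms by blast
  have "(\<Sum>l<n. scale (v $ l) (g l)) = 0"
  proof (rule coord_eqI)
    fix k assume k: "k < n"
    have "coord (\<Sum>l<n. scale (v $ l) (g l)) k = (coord_mat g *\<^sub>v v) $ k"
      unfolding coord_sum_scale[OF k] using k v(1) coord_mat_carrier[of g]
      by (simp add: scalar_prod_def lessThan_atLeast0 mult.commute)
    then show "coord (\<Sum>l<n. scale (v $ l) (g l)) k = coord 0 k" using v(3) k by (simp add: coord_0)
  qed
  moreover have "\<exists>l<n. v $ l \<noteq> 0" using v(1,2) by (auto intro: eq_vecI)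
  ultimately show thesis using that by blast
qed

definition power_det :: "'b \<Rightarrow> 'a" where
  "power_det d = det (coord_mat (\<lambda>j. d ^ j))"

lemma power_det_c: "power_det c = 1"
proof -
  have "coord_mat (\<lambda>j. c ^ j) = 1\<^sub>m n"
    by (rule eq_matI) (simp_all add: coord_mat_index coord_c_power coord_mat_def)
  then show ?thesis unfolding power_det_def by simp
qed

lemma primitive_imp_power_det_nonzero:
  assumes "primitive scale n d"
  shows "power_det d \<noteq> 0"
proof
  assume "power_det d = 0"
  then obtain w where "\<exists>l<n. w l \<noteq> 0" and "(\<Sum>l<n. scale (w l) (d ^ l)) = 0"
    unfolding power_det_def by (rule det_coord_mat_eq_0_imp_dependent)
  then show False using primitive_sum_eq_0[OF vector_space assms] by blast
qed

lemma power_det_nonzero_imp_primitive: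
  assumes unit: "d \<in> units" and det: "power_det d \<noteq> 0"
  shows "primitive scale n d"
proof -
  let ?B = "(\<lambda>i. d ^ i) ` {..<n}"
  have indep: "w l = 0" if "(\<Sum>l<n. scale (w l) (d ^ l)) = 0" "l < n" for w l
    using det_coord_mat_nonzero_imp_independent[OF that(1) _ that(2)] det
    unfolding power_det_def by blast
  have inj: "inj_on (\<lambda>i. d ^ i) {..<n}"
  proof (rule inj_onI, rule ccontr)
    fix i j assume ij: "i \<in> {..<n}" "j \<in> {..<n}" "d ^ i = d ^ j" "i \<noteq> j"
    let ?w = "\<lambda>l. (if l = i then 1 else 0) - (if l = j then 1 else (0::'a))"
    have "(\<Sum>l<n. scale (?w l) (d ^ l))
        = (\<Sum>l<n. (if l = i then d ^ l else 0) - (if l = j then d ^ l else 0))"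
      by (intro sum.cong refl) (simp add: scale_left_diff_distrib)
    also have "\<dots> = 0" using ij by (simp add: sum_subtractf)
    finally have "?w i = 0" by (rule indep) (use ij in auto)
    with \<open>i \<noteq> j\<close> show False by simp
  qed
  have "\<not> dependent ?B"
  proof
    assume "dependent ?B"
    then obtain u where u: "\<exists>v\<in>?B. u v \<noteq> 0" "(\<Sum>v\<in>?B. scale (u v) v) = 0"
      using dependent_finite[of ?B] by auto
    then have "(\<Sum>l<n. scale (u (d ^ l)) (d ^ l)) = 0" by (simp add: sum.reindex[OF inj])
    with u(1) indep[of "\<lambda>l. u (d ^ l)"] show False by auto
  qed
  moreover have "span ?B = UNIV"
  proof -
    have "y \<in> span ?B" for y
    proof -
      let ?g = "\<lambda>j. d ^ j"
      have "y = (\<Sum>j<n. scale (cramer_coeff ?g y j / det (coord_mat ?g)) (d ^ j))"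
        using det unfolding power_det_def by (rule expansion_cramer_coeff)
      also have "\<dots> \<in> span ?B" by (intro span_sum span_scale span_base) auto
      finally show ?thesis .
    qed
    then show ?thesis by auto
  qed
  ultimately show ?thesis unfolding primitive_def using unit inj by simp
qed

lemma primitive_iff_power_det: "d \<in> units \<Longrightarrow> primitive scale n d \<longleftrightarrow> power_det d \<noteq> 0"
  using primitive_imp_power_det_nonzero power_det_nonzero_imp_primitive by blast

lemma pcoords_eq_cramer_coeff:
  assumes "d \<in> units" and "power_det d \<noteq> 0" and "j < n"
  shows "pcoords scale n d y j = cramer_coeff (\<lambda>j. d ^ j) y j / power_det d"
  using assms expansion_cramer_coeff[of "\<lambda>j. d ^ j" y] unfolding power_det_def
  by (intro pcoords_eqI[OF vector_space power_det_nonzero_imp_primitive]) (simp_all add: power_det_def)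

(* The norm of b is the determinant of multiplication by b; adjugate_elt b = N(b) b^-1. *)
definition elt_norm :: "'b \<Rightarrow> 'a" where
  "elt_norm b = det (coord_mat (\<lambda>j. b * c ^ j))"

definition adjugate_elt :: "'b \<Rightarrow> 'b" where
  "adjugate_elt b = (\<Sum>j<n. scale (cramer_coeff (\<lambda>j. b * c ^ j) 1 j) (c ^ j))"

lemma mult_adjugate_elt: "b * adjugate_elt b = embed (elt_norm b)"
proof -
  have "b * adjugate_elt b = (\<Sum>j<n. scale (cramer_coeff (\<lambda>j. b * c ^ j) 1 j) (b * c ^ j))"
    unfolding adjugate_elt_def by (simp add: sum_distrib_left scale_mult_right)
  also have "\<dots> = embed (elt_norm b)" unfolding sum_cramer_coeff elt_norm_def embed_def ..
  finally show ?thesis .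
qed

lemma elt_norm_1: "elt_norm 1 = 1"
  using power_det_c unfolding power_det_def elt_norm_def by simp

lemma elt_norm_nonzero_iff: "elt_norm b \<noteq> 0 \<longleftrightarrow> b \<in> units"
proof
  assume "elt_norm b \<noteq> 0"
  then have "b * (embed (1 / elt_norm b) * adjugate_elt b) = 1"
    by (simp add: mult.left_commute[of b] mult_adjugate_elt flip: embed_mult)
  then show "b \<in> units" unfolding units_def by (metis dvdI mem_Collect_eq)
next
  assume b: "b \<in> units"
  show "elt_norm b \<noteq> 0"
  proof
    assume "elt_norm b = 0"
    then obtain w where w: "\<exists>l<n. w l \<noteq> 0" and "(\<Sum>l<n. scale (w l) (b * c ^ l)) = 0"
      unfolding elt_norm_def by (rule det_coord_mat_eq_0_imp_dependent)
    then have "b * of_coord w = 0" unfolding of_coord_def by (simp add: sum_distrib_left scale_mult_right)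
    then have "of_coord w = 0" using mult_uinv[OF b] by (metis mult.left_commute mult_1_right mult_zero_right)
    with w show False using coord_of_coord coord_0 by metis
  qed
qed

lemma adjugate_elt_eq: "b \<in> units \<Longrightarrow> adjugate_elt b = embed (elt_norm b) * uinv b"
  by (metis mult_adjugate_elt mult_uinv mult.left_commute mult_1_right)

definition cramer_numer :: "'b \<Rightarrow> 'b \<Rightarrow> nat \<Rightarrow> 'a" where
  "cramer_numer b y j = cramer_coeff (\<lambda>j. (c * b\<^sup>2) ^ j) (y * adjugate_elt b) j"

lemma top_coeff_eq_cramer_numer:
  assumes b: "b \<in> units" and det: "power_det (c * b\<^sup>2) \<noteq> 0"
  shows "top_coeff scale n (y * uinv b) (c * b\<^sup>2)
    = cramer_numer b y (n - 1) / (elt_norm b * power_det (c * b\<^sup>2))"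
proof -
  have norm: "elt_norm b \<noteq> 0" using b elt_norm_nonzero_iff by blast
  have "scale (1 / elt_norm b) (y * adjugate_elt b)
      = embed (1 / elt_norm b) * (y * (embed (elt_norm b) * uinv b))"
    by (simp only: adjugate_elt_eq[OF b] scale_eq_embed_mult)
  also have "\<dots> = (embed (1 / elt_norm b) * embed (elt_norm b)) * (y * uinv b)"
    by (simp only: ac_simps)
  also have "\<dots> = y * uinv b" using norm by (simp flip: embed_mult)
  finally have "y * uinv b = scale (1 / elt_norm b) (y * adjugate_elt b)" ..
  moreover have "c * b\<^sup>2 \<in> units" by (intro units_mult units_power c_unit b)
  ultimately show ?thesis
    unfolding top_coeff_def cramer_numer_def using det n_pos
    by (simp add: pcoords_eq_cramer_coeff cramer_coeff_scale)
qed

section \<open>Openness of U\<close>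

definition polynomial_map :: "((nat \<Rightarrow> 'a) \<Rightarrow> 'b) \<Rightarrow> bool" where
  "polynomial_map F \<longleftrightarrow> (\<forall>k. (\<lambda>v. coord (F v) k) \<in> poly_fun)"

lemma polynomial_map_const: "polynomial_map (\<lambda>v. a)"
  unfolding polynomial_map_def by (simp add: pf_const)

lemma polynomial_map_of_coord: "polynomial_map of_coord"
  unfolding polynomial_map_def
proof
  fix k
  show "(\<lambda>v. coord (of_coord v) k) \<in> poly_fun"
    by (cases "k < n") (simp_all add: coord_of_coord coord_ge pf_var pf_const)
qed

lemma polynomial_map_mult:
  "polynomial_map F \<Longrightarrow> polynomial_map G \<Longrightarrow> polynomial_map (\<lambda>v. F v * G v)"
  unfolding polynomial_map_def coord_mult by (auto intro!: poly_fun_sum pf_mult pf_const)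

lemma polynomial_map_power: "polynomial_map F \<Longrightarrow> polynomial_map (\<lambda>v. F v ^ k)"
  by (induction k) (simp_all add: polynomial_map_const polynomial_map_mult)

lemma polynomial_map_scale:
  "f \<in> poly_fun \<Longrightarrow> polynomial_map F \<Longrightarrow> polynomial_map (\<lambda>v. scale (f v) (F v))"
  unfolding polynomial_map_def by (simp add: coord_scale pf_mult)

lemma polynomial_map_sum:
  "finite A \<Longrightarrow> (\<And>j. j \<in> A \<Longrightarrow> polynomial_map (F j)) \<Longrightarrow> polynomial_map (\<lambda>v. \<Sum>j\<in>A. F j v)"
  unfolding polynomial_map_def coord_sum by (auto intro!: poly_fun_sum)

lemma poly_fun_det_coord_mat:
  assumes "\<And>j. j < n \<Longrightarrow> polynomial_map (\<lambda>v. g v j)"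
  shows "(\<lambda>v. det (coord_mat (g v))) \<in> poly_fun"
  unfolding coord_mat_def
  by (rule poly_fun_det[where f="\<lambda>k j v. coord (g v j) k", simplified])
    (use assms in \<open>auto simp: polynomial_map_def\<close>)

lemma poly_fun_cramer_coeff:
  assumes "\<And>j. j < n \<Longrightarrow> polynomial_map (\<lambda>v. g v j)" and "polynomial_map Y" and "j < n"
  shows "(\<lambda>v. cramer_coeff (g v) (Y v) j) \<in> poly_fun"
  unfolding cramer_coeff_def coord_mat_def
proof (intro poly_fun_sum pf_mult)
  fix l assume "l \<in> {..<n}"
  then show "(\<lambda>v. adj_mat (mat n n (\<lambda>(k, j). coord (g v j) k)) $$ (j, l)) \<in> poly_fun"
    by (intro poly_fun_adj_mat[where f="\<lambda>k j v. coord (g v j) k", simplified])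
      (use assms in \<open>auto simp: polynomial_map_def\<close>)
  show "(\<lambda>v. coord (Y v) l) \<in> poly_fun" using assms(2) unfolding polynomial_map_def by simp
qed simp

lemma polynomial_map_adjugate_elt: "polynomial_map (\<lambda>v. adjugate_elt (of_coord v))"
  unfolding adjugate_elt_def
  by (intro polynomial_map_sum polynomial_map_scale poly_fun_cramer_coeff polynomial_map_mult
      polynomial_map_of_coord polynomial_map_const) auto

lemma poly_fun_elt_norm: "(\<lambda>v. elt_norm (of_coord v)) \<in> poly_fun"
  unfolding elt_norm_def
  by (intro poly_fun_det_coord_mat polynomial_map_mult polynomial_map_of_coord polynomial_map_const)

lemma poly_fun_power_det: "polynomial_map F \<Longrightarrow> (\<lambda>v. power_det (F v)) \<in> poly_fun"
  unfolding power_det_def by (intro poly_fun_det_coord_mat polynomial_map_power)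

lemma poly_fun_cramer_numer: "j < n \<Longrightarrow> (\<lambda>v. cramer_numer (of_coord v) y j) \<in> poly_fun"
  unfolding cramer_numer_def
  by (intro poly_fun_cramer_coeff polynomial_map_mult polynomial_map_power polynomial_map_of_coord
      polynomial_map_const polynomial_map_adjugate_elt)

definition nonvanishing_set :: "(nat \<Rightarrow> nat \<Rightarrow> 'a) \<Rightarrow> nat \<Rightarrow> (nat \<Rightarrow> 'b) \<Rightarrow> 'b set" where
  "nonvanishing_set Q m x = {b \<in> {b \<in> units. primitive scale n (c * b\<^sup>2)}.
     qform Q m (\<lambda>i. top_coeff scale n (x i * uinv b) (c * b\<^sup>2)) \<noteq> 0}"

lemma mem_nonvanishing_set_iff:
  assumes b: "b \<in> units"
  shows "b \<in> nonvanishing_set Q m x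
    \<longleftrightarrow> power_det (c * b\<^sup>2) * qform Q m (\<lambda>i. cramer_numer b (x i) (n - 1)) \<noteq> 0"
proof -
  have unit: "c * b\<^sup>2 \<in> units" by (intro units_mult units_power c_unit b)
  have norm: "elt_norm b \<noteq> 0" using b elt_norm_nonzero_iff by blast
  show ?thesis
  proof (cases "power_det (c * b\<^sup>2) = 0")
    case True
    then show ?thesis using primitive_iff_power_det[OF unit] by (simp add: nonvanishing_set_def)
  next
    case False
    then have "qform Q m (\<lambda>i. top_coeff scale n (x i * uinv b) (c * b\<^sup>2))
        = qform Q m (\<lambda>i. cramer_numer b (x i) (n - 1)) / (elt_norm b * power_det (c * b\<^sup>2))\<^sup>2"
      by (simp add: top_coeff_eq_cramer_numer[OF b False] qform_divide)
    with False norm b show ?thesis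
      using primitive_iff_power_det[OF unit] by (simp add: nonvanishing_set_def)
  qed
qed

lemma open_in_units_nonvanishing_set: "open_in_units scale n c (nonvanishing_set Q m x)"
proof -
  define P where
    "P v = power_det (c * (of_coord v)\<^sup>2) * qform Q m (\<lambda>i. cramer_numer (of_coord v) (x i) (n - 1))"
    for v
  have "P \<in> poly_fun"
    unfolding P_def using n_pos
    by (intro pf_mult poly_fun_power_det poly_fun_qform poly_fun_cramer_numer polynomial_map_mult
        polynomial_map_power polynomial_map_of_coord polynomial_map_const) auto
  then have "zariski_open scale n c {y. \<exists>p\<in>{P}. p (pcoords scale n c y) \<noteq> 0}"
    unfolding zariski_open_def by blast
  moreover have "nonvanishing_set Q m x = {y. \<exists>p\<in>{P}. p (pcoords scale n c y) \<noteq> 0} \<inter> units"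
  proof (rule Set.set_eqI)
    fix b
    show "b \<in> nonvanishing_set Q m x \<longleftrightarrow> b \<in> {y. \<exists>p\<in>{P}. p (pcoords scale n c y) \<noteq> 0} \<inter> units"
      by (cases "b \<in> units")
        (simp_all add: P_def mem_nonvanishing_set_iff flip: coord_def, simp add: nonvanishing_set_def)
  qed
  ultimately show ?thesis unfolding open_in_units_def by blast
qed

section \<open>Restriction to the lines b = 1 + t e\<close>

lemma poly_map_embed: "poly (map_poly embed P) (embed t) = embed (poly P t)"
  by (induction P) (simp_all add: map_poly_pCons)

lemma coord_poly_embed: "coord (poly P (embed t)) k = poly (map_poly (\<lambda>s. coord s k) P) t"
proof (induction P)
  case (pCons a P)
  have "map_poly (\<lambda>s. coord s k) (pCons a P) = pCons (coord a k) (map_poly (\<lambda>s. coord s k) P)"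
    by (rule map_poly_pCons) (simp add: coord_0)
  with pCons.IH show ?case by (simp add: coord_add coord_embed_mult)
qed (simp add: coord_0)

lemma poly_embed_eqI:
  assumes "\<And>t. poly P (embed t) = poly R (embed t)"
  shows "P = R"
proof (rule poly_eqI)
  fix i
  have "coord (coeff (P - R) i) k = 0" for k
  proof -
    have "poly (map_poly (\<lambda>s. coord s k) (P - R)) t = 0" for t
      using coord_poly_embed[of "P - R" t k] assms[of t] by (simp add: coord_0)
    then have "map_poly (\<lambda>s. coord s k) (P - R) = 0" using poly_all_0_iff_0 by blast
    then have "coeff (map_poly (\<lambda>s. coord s k) (P - R)) i = 0" by simp
    then show ?thesis by (subst (asm) coeff_map_poly) (simp_all add: coord_0)
  qed
  then show "coeff P i = coeff R i" using coord_eqI[of "coeff (P - R) i" 0] coord_0 by simp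
qed

lemma polynomial_map_on_line:
  assumes "polynomial_map F"
  shows "\<exists>P. \<forall>t. F (\<lambda>i. u i + t * w i) = poly P (embed t)"
proof -
  have "\<forall>k. \<exists>P. \<forall>t. coord (F (\<lambda>i. u i + t * w i)) k = poly P t"
    using assms poly_fun_on_line unfolding polynomial_map_def by blast
  then obtain P where P: "\<And>k t. coord (F (\<lambda>i. u i + t * w i)) k = poly (P k) t"
    by metis
  have "F (\<lambda>i. u i + t * w i) = poly (\<Sum>k<n. map_poly embed (P k) * [:c ^ k:]) (embed t)" for t
    by (subst coord_expansion) (simp add: P poly_sum poly_map_embed mult_embed_eq_scale)
  then show ?thesis by blast
qed

lemma line_eq_of_coord: "1 + embed t * e = of_coord (\<lambda>i. coord 1 i + t * coord e i)"
  by (rule coord_eqI) (simp add: coord_of_coord coord_add coord_embed_mult)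

definition line_poly :: "('b \<Rightarrow> 'a) \<Rightarrow> 'b \<Rightarrow> 'a poly" where
  "line_poly f e = (SOME P. \<forall>t. f (1 + embed t * e) = poly P t)"

definition line_poly_elt :: "('b \<Rightarrow> 'b) \<Rightarrow> 'b \<Rightarrow> 'b poly" where
  "line_poly_elt F e = (SOME P. \<forall>t. F (1 + embed t * e) = poly P (embed t))"

lemma poly_line_poly:
  assumes "(\<lambda>v. f (of_coord v)) \<in> poly_fun"
  shows "f (1 + embed t * e) = poly (line_poly f e) t"
proof -
  have "\<exists>P. \<forall>t. f (1 + embed t * e) = poly P t"
    unfolding line_eq_of_coord using poly_fun_on_line[OF assms] .
  then show ?thesis unfolding line_poly_def by (rule someI_ex[THEN spec])
qed

lemma poly_line_poly_elt:
  assumes "polynomial_map (\<lambda>v. F (of_coord v))"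
  shows "F (1 + embed t * e) = poly (line_poly_elt F e) (embed t)"
proof -
  have "\<exists>P. \<forall>t. F (1 + embed t * e) = poly P (embed t)"
    unfolding line_eq_of_coord using polynomial_map_on_line[OF assms] .
  then show ?thesis unfolding line_poly_elt_def by (rule someI_ex[THEN spec])
qed

lemma coeff_0_line_poly: "(\<lambda>v. f (of_coord v)) \<in> poly_fun \<Longrightarrow> coeff (line_poly f e) 0 = f 1"
  using poly_line_poly[of f 0 e] by (simp add: poly_0_coeff_0)

abbreviation "norm_line \<equiv> line_poly elt_norm"
abbreviation "det_line \<equiv> line_poly (\<lambda>b. power_det (c * b\<^sup>2))"
abbreviation "adjugate_line \<equiv> line_poly_elt adjugate_elt"
abbreviation "numer_line e y j \<equiv> line_poly (\<lambda>b. cramer_numer b y j) e"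

lemma poly_fun_twisted_power_det: "(\<lambda>v. power_det (c * (of_coord v)\<^sup>2)) \<in> poly_fun"
  by (intro poly_fun_power_det polynomial_map_mult polynomial_map_power polynomial_map_of_coord
      polynomial_map_const)

lemma coeff_0_norm_line: "coeff (norm_line e) 0 = 1"
  by (simp add: coeff_0_line_poly poly_fun_elt_norm elt_norm_1)

lemma coeff_0_det_line: "coeff (det_line e) 0 = 1"
  by (simp add: coeff_0_line_poly[OF poly_fun_twisted_power_det] power_det_c)

lemma adjugate_line_eq: "[:1, e:] * adjugate_line e = map_poly embed (norm_line e)"
proof (rule poly_embed_eqI)
  fix t
  have "poly ([:1, e:] * adjugate_line e) (embed t)
      = (1 + embed t * e) * adjugate_elt (1 + embed t * e)"
    using poly_line_poly_elt[OF polynomial_map_adjugate_elt, of t e] by (simp add: algebra_simps)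
  also have "\<dots> = poly (map_poly embed (norm_line e)) (embed t)"
    by (simp add: mult_adjugate_elt poly_map_embed poly_line_poly[OF poly_fun_elt_norm])
  finally show "poly ([:1, e:] * adjugate_line e) (embed t) = poly (map_poly embed (norm_line e)) (embed t)" .
qed

lemma coeff_0_adjugate_line: "coeff (adjugate_line e) 0 = 1"
  using arg_cong[OF adjugate_line_eq, of "\<lambda>p. coeff p 0"]
  by (simp add: coeff_mult_0 coeff_map_poly coeff_0_norm_line)

lemma coeff_1_adjugate_line: "coeff (adjugate_line e) 1 = embed (coeff (norm_line e) 1) - e"
proof -
  have "coeff ([:1, e:] * adjugate_line e) 1 = coeff (map_poly embed (norm_line e)) 1"
    by (simp only: adjugate_line_eq)
  then have "coeff (adjugate_line e) 1 + e * coeff (adjugate_line e) 0 = embed (coeff (norm_line e) 1)"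
    by (simp only: coeff_mult_1 coeff_map_poly embed_0) simp
  then show ?thesis by (simp add: coeff_0_adjugate_line algebra_simps)
qed

lemma sum_numer_line:
  "(\<Sum>j<n. map_poly embed (numer_line e y j) * (twist_poly c e) ^ j)
    = map_poly embed (det_line e) * ([:y:] * adjugate_line e)"
proof (rule poly_embed_eqI)
  fix t
  define b where "b = 1 + embed t * e"
  have "poly (twist_poly c e) (embed t) = c * b\<^sup>2"
    by (simp add: poly_twist_poly b_def)
  then have "poly (\<Sum>j<n. map_poly embed (numer_line e y j) * (twist_poly c e) ^ j) (embed t)
      = (\<Sum>j<n. scale (poly (numer_line e y j) t) ((c * b\<^sup>2) ^ j))"
    by (simp add: poly_sum poly_map_embed embed_mult_eq_scale)
  also have "\<dots> = (\<Sum>j<n. scale (cramer_numer b y j) ((c * b\<^sup>2) ^ j))"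
    by (intro sum.cong refl) (simp add: b_def poly_line_poly[OF poly_fun_cramer_numer])
  also have "\<dots> = scale (power_det (c * b\<^sup>2)) (y * adjugate_elt b)"
    unfolding cramer_numer_def power_det_def by (rule sum_cramer_coeff)
  also have "\<dots> = scale (poly (det_line e) t) (y * poly (adjugate_line e) (embed t))"
    by (simp only: b_def poly_line_poly[OF poly_fun_twisted_power_det]
        poly_line_poly_elt[OF polynomial_map_adjugate_elt])
  also have "\<dots> = poly (map_poly embed (det_line e) * ([:y:] * adjugate_line e)) (embed t)"
    by (simp add: poly_map_embed embed_mult_eq_scale scale_mult_right)
  finally show "poly (\<Sum>j<n. map_poly embed (numer_line e y j) * (twist_poly c e) ^ j) (embed t)
      = poly (map_poly embed (det_line e) * ([:y:] * adjugate_line e)) (embed t)" .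
qed

lemma coeff_0_numer_line: "j < n \<Longrightarrow> coeff (numer_line e y j) 0 = coord y j"
proof -
  assume "j < n"
  have "(\<Sum>j<n. embed (coeff (numer_line e y j) 0) * c ^ j) = y"
    using arg_cong[OF sum_numer_line[where e = e and y = y], of "\<lambda>p. coeff p 0"]
    by (simp add: coeff_sum coeff_mult_0 coeff_map_poly coeff_twist_poly_power coeff_0_det_line
        coeff_0_adjugate_line)
  then have "of_coord (\<lambda>j. coeff (numer_line e y j) 0) = y"
    unfolding of_coord_def by (simp add: embed_mult_eq_scale)
  then show ?thesis using coord_of_coord[OF \<open>j < n\<close>] by metis
qed

(* The t-linear term of (c (1 + t e)^2)^j is 2 j c^j e, which makes odd_weight appear in the
   t-linear coefficient of {x b^-1, c b^2} along the line b = 1 + t e. *)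
definition odd_weight :: "'b \<Rightarrow> 'b" where
  "odd_weight y = y + (\<Sum>j<n. scale (of_nat (2 * j) * coord y j) (c ^ j))"

lemma coord_odd_weight:
  assumes "s < n"
  shows "coord (odd_weight y) s = of_nat (2 * s + 1) * coord y s"
proof -
  have "(\<Sum>j<n. of_nat (2 * j) * coord y j * coord (c ^ j) s)
      = (\<Sum>j<n. if j = s then of_nat (2 * j) * coord y j else 0)"
    by (intro sum.cong refl) (simp add: coord_c_power)
  also have "\<dots> = of_nat (2 * s) * coord y s" using assms by simp
  finally show ?thesis
    unfolding odd_weight_def by (simp add: coord_add coord_sum coord_scale algebra_simps)
qed

lemma coeff_1_numer_line:
  "coeff (numer_line e y (n - 1)) 1
    = (coeff (norm_line e) 1 + coeff (det_line e) 1) * coord y (n - 1) - coord (e * odd_weight y) (n - 1)"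
proof -
  have "embed (coeff (numer_line e y j) 0) * (of_nat (2 * j) * c ^ j * e)
      = e * scale (of_nat (2 * j) * coord y j) (c ^ j)" if "j < n" for j
  proof -
    have "embed (coeff (numer_line e y j) 0) * (of_nat (2 * j) * c ^ j * e)
        = e * (embed (of_nat (2 * j) * coord y j) * c ^ j)"
      using that by (simp add: coeff_0_numer_line ac_simps)
    then show ?thesis by (simp only: embed_mult_eq_scale)
  qed
  then have weight: "(\<Sum>j<n. embed (coeff (numer_line e y j) 0) * (of_nat (2 * j) * c ^ j * e))
      = e * odd_weight y - e * y"
    unfolding odd_weight_def by (simp add: distrib_left sum_distrib_left)
  have "(\<Sum>j<n. embed (coeff (numer_line e y j) 0) * (of_nat (2 * j) * c ^ j * e))
        + (\<Sum>j<n. embed (coeff (numer_line e y j) 1) * c ^ j)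
      = y * (embed (coeff (det_line e) 1) + coeff (adjugate_line e) 1)"
    using arg_cong[OF sum_numer_line[where e = e and y = y], of "\<lambda>p. coeff p 1"]
    by (simp only: coeff_sum coeff_mult_1 coeff_map_poly embed_0 coeff_twist_poly_power sum.distrib)
      (simp add: coeff_0_det_line coeff_0_adjugate_line algebra_simps)
  then have "(\<Sum>j<n. embed (coeff (numer_line e y j) 1) * c ^ j)
      = y * (embed (coeff (det_line e) 1) + coeff (adjugate_line e) 1) - (e * odd_weight y - e * y)"
    unfolding weight by (simp only: eq_diff_eq add.commute)
  also have "\<dots> = embed (coeff (norm_line e) 1 + coeff (det_line e) 1) * y - e * odd_weight y"
    unfolding coeff_1_adjugate_line by (simp add: algebra_simps)
  finally have "of_coord (\<lambda>j. coeff (numer_line e y j) 1)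
      = embed (coeff (norm_line e) 1 + coeff (det_line e) 1) * y - e * odd_weight y"
    unfolding of_coord_def by (simp only: embed_mult_eq_scale)
  then have "coeff (numer_line e y (n - 1)) 1
      = coord (embed (coeff (norm_line e) 1 + coeff (det_line e) 1) * y - e * odd_weight y) (n - 1)"
    using coord_of_coord[of "n - 1" "\<lambda>j. coeff (numer_line e y j) 1"] n_pos by simp
  then show ?thesis by (simp only: coord_diff coord_embed_mult)
qed

lemma sum_smult_numer_line_eq_0:
  assumes "(\<Sum>a\<in>A. scale (u a) (x a)) = 0" and "j < n"
  shows "(\<Sum>a\<in>A. smult (u a) (numer_line e (x a) j)) = 0"
proof -
  have "poly (\<Sum>a\<in>A. smult (u a) (numer_line e (x a) j)) t = 0" for t
  proof -
    let ?b = "1 + embed t * e"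
    have "poly (\<Sum>a\<in>A. smult (u a) (numer_line e (x a) j)) t = (\<Sum>a\<in>A. u a * cramer_numer ?b (x a) j)"
      by (simp add: poly_sum poly_line_poly[OF poly_fun_cramer_numer[OF \<open>j < n\<close>]])
    also have "\<dots> = cramer_numer ?b (\<Sum>a\<in>A. scale (u a) (x a)) j"
      unfolding cramer_numer_def
      by (simp add: cramer_coeff_sum cramer_coeff_scale sum_distrib_right flip: scale_mult_left)
    also have "\<dots> = 0"
      using assms(1) unfolding cramer_numer_def cramer_coeff_def by (simp add: coord_0)
    finally show ?thesis .
  qed
  then show ?thesis using poly_all_0_iff_0 by blast
qed

lemma qform_numer_line_eq_0:
  assumes empty: "nonvanishing_set Q m x = {}"
  shows "qform_poly Q m (\<lambda>a. numer_line e (x a) (n - 1)) = 0"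
proof (rule poly_eq_0_if_roots_cofinite[OF infinite_UNIV_char_0])
  have "coeff (norm_line e * det_line e) 0 \<noteq> 0"
    by (simp add: coeff_mult_0 coeff_0_norm_line coeff_0_det_line)
  then show "finite {t. poly (norm_line e * det_line e) t = 0}"
    by (intro poly_roots_finite) auto
next
  fix t assume "t \<notin> {t. poly (norm_line e * det_line e) t = 0}"
  moreover define b where "b = 1 + embed t * e"
  ultimately have norm: "elt_norm b \<noteq> 0" and det: "power_det (c * b\<^sup>2) \<noteq> 0"
    by (simp_all add: poly_line_poly[OF poly_fun_elt_norm] poly_line_poly[OF poly_fun_twisted_power_det])
  have unit: "b \<in> units" using norm elt_norm_nonzero_iff by blast
  then have "qform Q m (\<lambda>i. cramer_numer b (x i) (n - 1)) = 0"
    using mem_nonvanishing_set_iff[OF unit, of Q m x] empty det by simp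
  then show "poly (qform_poly Q m (\<lambda>a. numer_line e (x a) (n - 1))) t = 0"
    using n_pos by (simp add: poly_qform_poly b_def poly_line_poly[OF poly_fun_cramer_numer])
qed

section \<open>Non-emptiness of U\<close>

lemma top_coord_c_power_mult_odd_weight:
  "coord (c ^ r * odd_weight y) (n - 1)
    = (\<Sum>s<n. coord (c ^ (r + s)) (n - 1) * (of_nat (2 * s + 1) * coord y s))"
proof -
  have "c ^ r * odd_weight y = (\<Sum>s<n. scale (coord (odd_weight y) s) (c ^ (r + s)))"
    by (subst coord_expansion[of "odd_weight y"]) (simp add: sum_distrib_left scale_mult_right power_add)
  then show ?thesis by (simp add: coord_sum coord_scale coord_odd_weight mult.commute)
qed

lemma sum_mult_eq_0_if_top_coord_odd_weight:
  assumes "\<And>e. (\<Sum>a\<in>A. scale (coord (e * odd_weight (y a)) (n - 1)) (z a)) = 0"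
  shows "(\<Sum>a\<in>A. y a * z a) = 0"
proof -
  \<comment> \<open>For e = c^r the hypothesis is a triangular Hankel system in the W s.\<close>
  define W where "W s = (\<Sum>a\<in>A. scale (coord (y a) s) (z a))" for s
  have scaled: "scale (of_nat (2 * s + 1)) (W s) = 0" if "s < n" for s
  proof (rule hankel_triangular_eq_0[OF module_axioms _ _ _ that])
    show "coord (c ^ j) (n - 1) = 0" if "j < n - 1" for j
      using that coord_c_power[of j "n - 1"] by simp
    show "coord (c ^ (n - 1)) (n - 1) = 1"
      using coord_c_power[of "n - 1" "n - 1"] n_pos by simp
    fix r assume "r < n"
    have "(\<Sum>s<n. scale (coord (c ^ (r + s)) (n - 1)) (scale (of_nat (2 * s + 1)) (W s)))
        = (\<Sum>a\<in>A. scale (coord (c ^ r * odd_weight (y a)) (n - 1)) (z a))"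
      unfolding W_def top_coord_c_power_mult_odd_weight
      by (simp add: scale_sum_right scale_sum_left sum.swap[of _ A] mult.assoc)
    also have "\<dots> = 0" by (rule assms)
    finally show "(\<Sum>s<n. scale (coord (c ^ (r + s)) (n - 1)) (scale (of_nat (2 * s + 1)) (W s))) = 0" .
  qed
  have W: "W s = 0" if "s < n" for s
    using scaled[OF that] of_nat_neq_0[of "2 * s", where 'a = 'a] by simp
  have "y a * z a = (\<Sum>s<n. c ^ s * scale (coord (y a) s) (z a))" for a
  proof -
    have "y a * z a = (\<Sum>s<n. scale (coord (y a) s) (c ^ s)) * z a"
      by (rule arg_cong[where f = "\<lambda>u. u * z a"], rule coord_expansion)
    then show ?thesis by (simp add: sum_distrib_right scale_mult_right flip: scale_mult_left)
  qed
  then have "(\<Sum>a\<in>A. y a * z a) = (\<Sum>a\<in>A. \<Sum>s<n. c ^ s * scale (coord (y a) s) (z a))"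
    by simp
  also have "\<dots> = (\<Sum>s<n. c ^ s * W s)"
    unfolding W_def by (simp add: sum_distrib_left) (rule sum.swap)
  also have "\<dots> = 0" using W by simp
  finally show ?thesis .
qed

definition odd_pairing :: "(nat \<Rightarrow> 'b) \<Rightarrow> 'b \<Rightarrow> nat \<Rightarrow> 'a" where
  "odd_pairing x e a = coord (e * odd_weight (x a)) (n - 1)"

lemma odd_pairing_add: "odd_pairing x (e + e') = (\<lambda>a. odd_pairing x e a + odd_pairing x e' a)"
  unfolding odd_pairing_def by (simp add: distrib_right coord_add)

lemma sum_scale_grad_eq_0_if_polar_odd_pairing:
  assumes "\<And>e. qform_polar Q m u (odd_pairing x e) = 0"
  shows "(\<Sum>b<m. scale (qform_grad Q m u b) (x b)) = 0"
proof -
  have "(\<Sum>b<m. x b * embed (qform_grad Q m u b)) = 0"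
  proof (rule sum_mult_eq_0_if_top_coord_odd_weight)
    fix e
    have "(\<Sum>b<m. scale (coord (e * odd_weight (x b)) (n - 1)) (embed (qform_grad Q m u b)))
        = embed (qform_polar Q m u (odd_pairing x e))"
      unfolding qform_polar_eq_grad odd_pairing_def embed_def by (simp add: scale_sum_left)
    then show "(\<Sum>b<m. scale (coord (e * odd_weight (x b)) (n - 1)) (embed (qform_grad Q m u b))) = 0"
      using assms by simp
  qed
  then show ?thesis by (simp add: mult_embed_eq_scale)
qed

lemma qformS_eq_0_if_polar_odd_pairing:
  assumes "\<And>e e'. qform_polar Q m (odd_pairing x e) (odd_pairing x e') = 0"
  shows "qformS scale Q m x = 0"
proof -
  define z where "z a = (\<Sum>b<m. scale (Q a b + Q b a) (x b))" for a
  have "(\<Sum>a<m. x a * z a) = 0"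
  proof (rule sum_mult_eq_0_if_top_coord_odd_weight)
    fix e
    have "(\<Sum>a<m. scale (odd_pairing x e a) (z a))
        = (\<Sum>b<m. scale (qform_grad Q m (odd_pairing x e) b) (x b))"
      unfolding z_def qform_grad_def
      by (simp add: scale_sum_right scale_sum_left mult.commute) (rule sum.swap)
    also have "\<dots> = 0" using assms by (rule sum_scale_grad_eq_0_if_polar_odd_pairing)
    finally show "(\<Sum>a<m. scale (coord (e * odd_weight (x a)) (n - 1)) (z a)) = 0"
      unfolding odd_pairing_def .
  qed
  moreover have "(\<Sum>a<m. x a * z a) = scale 2 (qformS scale Q m x)"
  proof -
    have "(\<Sum>a<m. x a * z a)
        = (\<Sum>a<m. \<Sum>b<m. scale (Q a b) (x a * x b)) + (\<Sum>a<m. \<Sum>b<m. scale (Q b a) (x a * x b))"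
      unfolding z_def
      by (simp add: sum_distrib_left distrib_left scale_left_distrib scale_mult_right sum.distrib)
    also have "(\<Sum>a<m. \<Sum>b<m. scale (Q b a) (x a * x b)) = (\<Sum>b<m. \<Sum>a<m. scale (Q b a) (x a * x b))"
      by (rule sum.swap)
    also have "\<dots> = qformS scale Q m x"
      unfolding qformS_def by (simp add: mult.commute)
    finally show ?thesis
      unfolding qformS_def[symmetric] by (simp add: scale_left_distrib[of 1 1, simplified])
  qed
  ultimately show ?thesis by simp
qed

lemma coeffs_qform_numer_line:
  fixes e :: 'b and x :: "nat \<Rightarrow> 'b" and Q :: "nat \<Rightarrow> nat \<Rightarrow> 'a" and m :: nat
  assumes empty: "nonvanishing_set Q m x = {}"
  defines "v \<equiv> \<lambda>a. coord (x a) (n - 1)"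
    and "r \<equiv> \<lambda>a. (coeff (norm_line e) 1 + coeff (det_line e) 1) * coord (x a) (n - 1)
                   - odd_pairing x e a"
  shows "qform Q m v = 0"
    and "qform_polar Q m v r = 0"
    and "qform_polar Q m v (\<lambda>a. coeff (numer_line e (x a) (n - 1)) 2) + qform Q m r = 0"
proof -
  let ?P = "\<lambda>a. numer_line e (x a) (n - 1)"
  have vanish: "coeff (qform_poly Q m ?P) k = 0" for k
    using qform_numer_line_eq_0[OF empty] by simp
  have P0: "(\<lambda>a. coeff (?P a) 0) = v"
    unfolding v_def using n_pos by (simp add: coeff_0_numer_line)
  have P1: "(\<lambda>a. coeff (?P a) 1) = r"
    unfolding r_def odd_pairing_def by (rule ext, rule coeff_1_numer_line)
  show "qform Q m v = 0" using vanish[of 0] unfolding coeff_qform_poly P0 .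
  show "qform_polar Q m v r = 0" using vanish[of 1] unfolding coeff_qform_poly P0 P1 .
  show "qform_polar Q m v (\<lambda>a. coeff (?P a) 2) + qform Q m r = 0"
    using vanish[of 2] unfolding coeff_qform_poly P0 P1 .
qed

lemma polar_top_coords_odd_pairing_eq_0:
  assumes empty: "nonvanishing_set Q m x = {}"
  shows "qform_polar Q m (\<lambda>a. coord (x a) (n - 1)) (odd_pairing x e) = 0"
  using coeffs_qform_numer_line(1)[OF empty] coeffs_qform_numer_line(2)[OF empty, of e]
  by (simp add: qform_polar_scaled_diff)

lemma qform_odd_pairing_eq_0:
  assumes empty: "nonvanishing_set Q m x = {}"
  shows "qform Q m (odd_pairing x e) = 0"
proof -
  let ?v = "\<lambda>a. coord (x a) (n - 1)" and ?r2 = "\<lambda>a. coeff (numer_line e (x a) (n - 1)) 2"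
  have "(\<Sum>b<m. scale (qform_grad Q m ?v b) (x b)) = 0"
    using polar_top_coords_odd_pairing_eq_0[OF empty] by (rule sum_scale_grad_eq_0_if_polar_odd_pairing)
  then have "(\<Sum>b<m. smult (qform_grad Q m ?v b) (numer_line e (x b) (n - 1))) = 0"
    using n_pos by (intro sum_smult_numer_line_eq_0) auto
  then have "coeff (\<Sum>b<m. smult (qform_grad Q m ?v b) (numer_line e (x b) (n - 1))) 2 = 0"
    by simp
  then have "qform_polar Q m ?v ?r2 = 0"
    unfolding qform_polar_eq_grad by (simp add: coeff_sum mult.commute)
  then show ?thesis
    using coeffs_qform_numer_line(1)[OF empty] coeffs_qform_numer_line(3)[OF empty, of e]
      polar_top_coords_odd_pairing_eq_0[OF empty, of e]
    by (simp add: qform_scaled_diff)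
qed

lemma polar_odd_pairing_eq_0:
  assumes empty: "nonvanishing_set Q m x = {}"
  shows "qform_polar Q m (odd_pairing x e) (odd_pairing x e') = 0"
  using qform_add[of Q m "odd_pairing x e" "odd_pairing x e'"]
  by (simp add: qform_odd_pairing_eq_0[OF empty] flip: odd_pairing_add)

end

theorem theorem3p11:
  fixes scale :: "'a::field_char_0 \<Rightarrow> 'b::comm_ring_1 \<Rightarrow> 'b"
    and n m :: nat and c :: 'b and Q :: "nat \<Rightarrow> nat \<Rightarrow> 'a" and x :: "nat \<Rightarrow> 'b"
  assumes "k_algebra scale"
    and "primitive scale n c"
    and "regular_qform Q m"
    and "qformS scale Q m x \<noteq> 0"
  defines "V \<equiv> {b \<in> units. primitive scale n (c * b ^ 2)}"
  defines "U \<equiv> {b \<in> V. qform Q m (\<lambda>i. top_coeff scale n (x i * uinv b) (c * b ^ 2)) \<noteq> 0}"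
  shows "U \<noteq> {} \<and> open_in_units scale n c U"
proof -
  interpret simple_extension scale n c
    using assms(1,2) by unfold_locales
  have U: "U = nonvanishing_set Q m x"
    unfolding U_def V_def nonvanishing_set_def ..
  have "U \<noteq> {}"
  proof
    assume "U = {}"
    then have "qformS scale Q m x = 0"
      unfolding U by (intro qformS_eq_0_if_polar_odd_pairing polar_odd_pairing_eq_0)
    with assms(4) show False ..
  qed
  moreover have "open_in_units scale n c U"
    unfolding U by (rule open_in_units_nonvanishing_set)
  ultimately show ?thesis ..
qed

end
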